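(* Let $k$ be a field of characteristic $0$, $R = k[t_1, \dots, t_n]$, and let $x_1, \dots, x_m \in (k^* )^n$ with $x_i = (x_{i,1}, \dots, x_{i,n})$. Let $\mathfrak{m} = (t_1 - 1, \dots, t_n - 1) \subset R$, let $\mathfrak{p} \subset \mathfrak{m}$ be a prime ideal of height $n'$, and let $A = \operatorname{Stab}_X(\mathfrak{p})$. Then there exists a subgroup $B \subset \mathbf{Z}^n$ of rank at least $n'$ such that $\langle a, b \rangle_X = 1$ for all $a \in A$ and $b \in B$.
   Context: For $a \in \mathbf{Z}^m$ write $x^a = \prod_{i=1}^m x_i^{a_i} \in (k^* )^n$ (coordinatewise). An element $z = (z_1,\dots,z_n) \in (k^* )^n$ acts on $R$ by $(z\cdot f)(t_1,\dots,t_n) = f(z_1t_1, \dots, z_nt_n)$, and for an ideal $\mathfrak{p}$, $\operatorname{Stab}_X(\mathfrak{p}) = \{a \in \mathbf{Z}^m : x^a \cdot \mathfrak{p} = \mathfrak{p}\}$. The pairing $\langle\cdot,\cdot\rangle_X: \mathbf{Z}^m \times \mathbf{Z}^n \to k^*$ is $\langle (a_i), (b_j) \rangle_X = \prod_{i,j} x_{i,j}^{a_i b_j}$. *)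

theory Defs
  imports "HOL-Library.Poly_Mapping" "HOL-Library.Extended_Nat"
begin

text \<open>Polynomial ring k[t_j : j in 'n] over a commutative ring, variables indexed by a finite type 'n:
  a polynomial is a finitely supported map from monomials (exponent vectors 'n =>0 nat) to coefficients.\<close>

type_synonym ('n, 'k) mpoly = "('n \<Rightarrow>\<^sub>0 nat) \<Rightarrow>\<^sub>0 'k"

definition var :: "'n \<Rightarrow> ('n, 'k::comm_ring_1) mpoly" where
  "var j = Poly_Mapping.single (Poly_Mapping.single j 1) 1"

definition is_ideal :: "'a::comm_ring_1 set \<Rightarrow> bool" where
  "is_ideal I \<longleftrightarrow> 0 \<in> I \<and> (\<forall>a\<in>I. \<forall>b\<in>I. a + b \<in> I) \<and> (\<forall>r. \<forall>a\<in>I. r * a \<in> I)"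

definition is_prime_ideal :: "'a::comm_ring_1 set \<Rightarrow> bool" where
  "is_prime_ideal P \<longleftrightarrow> is_ideal P \<and> P \<noteq> UNIV \<and> (\<forall>a b. a * b \<in> P \<longrightarrow> a \<in> P \<or> b \<in> P)"

definition ideal_gen :: "'a::comm_ring_1 set \<Rightarrow> 'a set" where
  "ideal_gen S = \<Inter>{I. is_ideal I \<and> S \<subseteq> I}"

definition prime_chain_ending :: "'a::comm_ring_1 set \<Rightarrow> nat \<Rightarrow> bool" where
  "prime_chain_ending P k \<longleftrightarrow> (\<exists>C :: nat \<Rightarrow> 'a set.
      (\<forall>i\<le>k. is_prime_ideal (C i)) \<and> (\<forall>i<k. C i \<subset> C (Suc i)) \<and> C k = P)"

definition ideal_height :: "'a::comm_ring_1 set \<Rightarrow> enat" where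
  "ideal_height P = Sup {enat k | k. prime_chain_ending P k}"

definition max_ideal_one :: "('n, 'k::comm_ring_1) mpoly set" where
  "max_ideal_one = ideal_gen (range (\<lambda>j. var j - 1))"

text \<open>Torus action: (z . f)(t_1,...,t_n) = f(z_1 t_1, ..., z_n t_n), i.e. the coefficient of
  the monomial t^alpha gets multiplied by z^alpha.\<close>
definition torus_act :: "('n::finite \<Rightarrow> 'k::comm_ring_1) \<Rightarrow> ('n, 'k) mpoly \<Rightarrow> ('n, 'k) mpoly" where
  "torus_act z f = Poly_Mapping.mapp (\<lambda>\<alpha> c. c * (\<Prod>j\<in>UNIV. z j ^ Poly_Mapping.lookup \<alpha> j)) f"

definition tpow :: "('m::finite \<Rightarrow> 'n \<Rightarrow> 'k::field) \<Rightarrow> ('m \<Rightarrow> int) \<Rightarrow> ('n \<Rightarrow> 'k)" where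
  "tpow x a = (\<lambda>j. \<Prod>i\<in>UNIV. x i j powi a i)"

definition Stab :: "('m::finite \<Rightarrow> 'n::finite \<Rightarrow> 'k::field) \<Rightarrow> ('n, 'k) mpoly set \<Rightarrow> ('m \<Rightarrow> int) set" where
  "Stab x P = {a. torus_act (tpow x a) ` P = P}"

definition pairing :: "('m::finite \<Rightarrow> 'n::finite \<Rightarrow> 'k::field) \<Rightarrow> ('m \<Rightarrow> int) \<Rightarrow> ('n \<Rightarrow> int) \<Rightarrow> 'k" where
  "pairing x a b = (\<Prod>i\<in>UNIV. \<Prod>j\<in>UNIV. x i j powi (a i * b j))"

definition is_subgroup :: "('n \<Rightarrow> int) set \<Rightarrow> bool" where
  "is_subgroup B \<longleftrightarrow> (\<lambda>j. 0) \<in> B \<and> (\<forall>a\<in>B. \<forall>b\<in>B. (\<lambda>j. a j + b j) \<in> B) \<and> (\<forall>a\<in>B. (\<lambda>j. - a j) \<in> B)"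

definition Z_indep_family :: "('n \<Rightarrow> int) set \<Rightarrow> nat \<Rightarrow> bool" where
  "Z_indep_family B r \<longleftrightarrow> (\<exists>v :: nat \<Rightarrow> 'n \<Rightarrow> int. (\<forall>i<r. v i \<in> B) \<and>
      (\<forall>c :: nat \<Rightarrow> int. (\<forall>j. (\<Sum>i<r. c i * v i j) = 0) \<longrightarrow> (\<forall>i<r. c i = 0)))"

definition Z_rank :: "('n \<Rightarrow> int) set \<Rightarrow> enat" where
  "Z_rank B = Sup {enat r | r. Z_indep_family B r}"

end

theory Submission
  imports Defs "HOL-Library.FuncSet"
begin

text \<open>Let \<open>A = Stab\<^sub>X(\<pp>)\<close> and let \<open>B\<close> be its annihilator under the pairing. If \<open>B\<close> had rank
  \<open>< n'\<close>, a maximal set \<open>J\<close> of coordinates with \<open>B \<inter> \<int>\<^sup>J = 0\<close> would have more than \<open>n - n'\<close>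
  elements. The monomials in the \<open>t\<^sub>j\<close>, \<open>j \<in> J\<close>, restrict to pairwise distinct characters
  \<open>a \<mapsto> (x\<^sup>a)\<^sup>\<gamma>\<close> of \<open>A\<close>, and every \<open>f \<in> \<pp>\<close> vanishes at all \<open>x\<^sup>a\<close>, \<open>a \<in> A\<close>, because \<open>\<pp> \<subseteq> \<mm>\<close>
  is \<open>A\<close>-stable; by Artin's independence of characters the \<open>t\<^sub>j\<close>, \<open>j \<in> J\<close>, stay algebraically
  independent modulo \<open>\<pp>\<close>. Going down a chain of primes of length \<open>n'\<close> below \<open>\<pp>\<close>, each step adds
  one more element that is algebraically independent modulo the smaller prime. This yields more
  than \<open>n\<close> algebraically independent polynomials in \<open>n\<close> variables, which a dimension count
  rules out.\<close>

lemma is_ideal_zero: "is_ideal I \<Longrightarrow> 0 \<in> I"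
  by (simp add: is_ideal_def)

lemma is_ideal_add: "is_ideal I \<Longrightarrow> a \<in> I \<Longrightarrow> b \<in> I \<Longrightarrow> a + b \<in> I"
  by (simp add: is_ideal_def)

lemma is_ideal_mult_left: "is_ideal I \<Longrightarrow> a \<in> I \<Longrightarrow> r * a \<in> I"
  by (simp add: is_ideal_def)

lemma is_ideal_diff: "is_ideal I \<Longrightarrow> a \<in> I \<Longrightarrow> b \<in> I \<Longrightarrow> a - b \<in> I"
  using is_ideal_add[of I a "(- 1) * b"] is_ideal_mult_left[of I b "- 1"] by simp

lemma is_ideal_sum: "is_ideal I \<Longrightarrow> (\<And>x. x \<in> S \<Longrightarrow> f x \<in> I) \<Longrightarrow> sum f S \<in> I"
  by (induction S rule: infinite_finite_induct) (auto simp: is_ideal_zero is_ideal_add)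

lemma is_prime_ideal_power_notin:
  assumes P: "is_prime_ideal P" and g: "g \<notin> P"
  shows "g ^ e \<notin> P"
proof (induction e)
  case 0
  have "1 \<notin> P"
    using P is_ideal_mult_left[of P 1] unfolding is_prime_ideal_def by auto
  then show ?case by simp
next
  case (Suc e)
  then show ?case using P g unfolding is_prime_ideal_def by auto
qed

lemma is_prime_ideal_cancel_power:
  "is_prime_ideal P \<Longrightarrow> g \<notin> P \<Longrightarrow> g ^ e * f \<in> P \<Longrightarrow> f \<in> P"
  using is_prime_ideal_power_notin unfolding is_prime_ideal_def by blast

lemma is_ideal_lowest_slice:
  assumes I: "is_ideal I" and g: "g \<in> I" and fin: "finite M"
    and rel: "(\<Sum>\<mu>\<in>M. f \<mu> * g ^ d \<mu>) \<in> I"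
  shows "(\<Sum>\<mu>\<in>{\<mu>\<in>M. d \<mu> = 0}. f \<mu>) \<in> I"
proof -
  have slice: "M \<inter> {\<mu>. d \<mu> = 0} = {\<mu>\<in>M. d \<mu> = 0}" and rest: "M - {\<mu>. d \<mu> = 0} = {\<mu>\<in>M. d \<mu> \<noteq> 0}"
    by auto
  have "(\<Sum>\<mu>\<in>M. f \<mu> * g ^ d \<mu>) = (\<Sum>\<mu>\<in>{\<mu>\<in>M. d \<mu> = 0}. f \<mu> * g ^ d \<mu>)
      + (\<Sum>\<mu>\<in>{\<mu>\<in>M. d \<mu> \<noteq> 0}. f \<mu> * g ^ d \<mu>)"
    unfolding slice[symmetric] rest[symmetric] by (rule sum.Int_Diff[OF fin])
  also have "(\<Sum>\<mu>\<in>{\<mu>\<in>M. d \<mu> = 0}. f \<mu> * g ^ d \<mu>) = (\<Sum>\<mu>\<in>{\<mu>\<in>M. d \<mu> = 0}. f \<mu>)"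
    by (rule sum.cong) auto
  finally have split: "(\<Sum>\<mu>\<in>{\<mu>\<in>M. d \<mu> = 0}. f \<mu>)
      = (\<Sum>\<mu>\<in>M. f \<mu> * g ^ d \<mu>) - (\<Sum>\<mu>\<in>{\<mu>\<in>M. d \<mu> \<noteq> 0}. f \<mu> * g ^ d \<mu>)"
    by simp
  have "(\<Sum>\<mu>\<in>{\<mu>\<in>M. d \<mu> \<noteq> 0}. f \<mu> * g ^ d \<mu>) \<in> I"
  proof (rule is_ideal_sum[OF I])
    fix \<mu> assume "\<mu> \<in> {\<mu>\<in>M. d \<mu> \<noteq> 0}"
    then have "d \<mu> = Suc (d \<mu> - 1)"
      by simp
    then have "f \<mu> * g ^ d \<mu> = (f \<mu> * g ^ (d \<mu> - 1)) * g"
      by (metis power_Suc2 mult.assoc)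
    then show "f \<mu> * g ^ d \<mu> \<in> I"
      using is_ideal_mult_left[OF I g] by simp
  qed
  then show ?thesis
    unfolding split by (rule is_ideal_diff[OF I rel])
qed

section \<open>Evaluation and the torus action\<close>

definition monomial_value :: "('n::finite \<Rightarrow> 'k::comm_ring_1) \<Rightarrow> ('n \<Rightarrow>\<^sub>0 nat) \<Rightarrow> 'k" where
  "monomial_value z \<alpha> = (\<Prod>j\<in>UNIV. z j ^ Poly_Mapping.lookup \<alpha> j)"

definition mpoly_eval :: "('n::finite, 'k::comm_ring_1) mpoly \<Rightarrow> ('n \<Rightarrow> 'k) \<Rightarrow> 'k" where
  "mpoly_eval f z = (\<Sum>\<alpha>\<in>Poly_Mapping.keys f. Poly_Mapping.lookup f \<alpha> * monomial_value z \<alpha>)"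

lemma monomial_value_add: "monomial_value z (\<alpha> + \<beta>) = monomial_value z \<alpha> * monomial_value z \<beta>"
  by (simp add: monomial_value_def lookup_add power_add prod.distrib)

lemma monomial_value_zero [simp]: "monomial_value z 0 = 1"
  by (simp add: monomial_value_def)

lemma monomial_value_one [simp]: "monomial_value (\<lambda>_. 1) \<alpha> = 1"
  by (simp add: monomial_value_def)

lemma monomial_value_nonzero: "(\<And>j. z j \<noteq> (0::'k::field)) \<Longrightarrow> monomial_value z \<alpha> \<noteq> 0"
  by (simp add: monomial_value_def)

lemma mpoly_eval_superset:
  assumes "finite S" "Poly_Mapping.keys f \<subseteq> S"
  shows "mpoly_eval f z = (\<Sum>\<alpha>\<in>S. Poly_Mapping.lookup f \<alpha> * monomial_value z \<alpha>)"
  unfolding mpoly_eval_def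
  by (rule sum.mono_neutral_left) (use assms in \<open>auto simp: in_keys_iff\<close>)

lemma mpoly_eval_add: "mpoly_eval (f + g) z = mpoly_eval f z + mpoly_eval g z"
proof -
  let ?S = "Poly_Mapping.keys f \<union> Poly_Mapping.keys g"
  have "mpoly_eval (f + g) z = (\<Sum>\<alpha>\<in>?S. Poly_Mapping.lookup (f + g) \<alpha> * monomial_value z \<alpha>)"
    by (rule mpoly_eval_superset) (auto simp: keys_add)
  also have "\<dots> = (\<Sum>\<alpha>\<in>?S. Poly_Mapping.lookup f \<alpha> * monomial_value z \<alpha>)
      + (\<Sum>\<alpha>\<in>?S. Poly_Mapping.lookup g \<alpha> * monomial_value z \<alpha>)"
    by (simp add: lookup_add distrib_right sum.distrib)
  also have "\<dots> = mpoly_eval f z + mpoly_eval g z"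
    by (simp add: mpoly_eval_superset[of ?S f z] mpoly_eval_superset[of ?S g z])
  finally show ?thesis .
qed

lemma mpoly_eval_zero [simp]: "mpoly_eval 0 z = 0"
  by (simp add: mpoly_eval_def)

lemma mpoly_eval_diff: "mpoly_eval (f - g) z = mpoly_eval f z - mpoly_eval g z"
  using mpoly_eval_add[of "f - g" g z] by (simp add: eq_diff_eq)

lemma mpoly_eval_sum: "mpoly_eval (sum f S) z = (\<Sum>x\<in>S. mpoly_eval (f x) z)"
  by (induction S rule: infinite_finite_induct) (auto simp: mpoly_eval_add)

lemma mpoly_eval_single [simp]:
  "mpoly_eval (Poly_Mapping.single \<alpha> c) z = c * monomial_value z \<alpha>"
  by (cases "c = 0") (auto simp: mpoly_eval_def)

lemma mpoly_sum_single_lookup: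
  "f = (\<Sum>\<alpha>\<in>Poly_Mapping.keys f. Poly_Mapping.single \<alpha> (Poly_Mapping.lookup f \<alpha>))"
proof (rule poly_mapping_eqI)
  fix \<beta>
  show "Poly_Mapping.lookup f \<beta>
      = Poly_Mapping.lookup (\<Sum>\<alpha>\<in>Poly_Mapping.keys f. Poly_Mapping.single \<alpha> (Poly_Mapping.lookup f \<alpha>)) \<beta>"
    by (cases "\<beta> \<in> Poly_Mapping.keys f") (auto simp: lookup_sum lookup_single when_def in_keys_iff)
qed

lemma mpoly_eval_mult: "mpoly_eval (f * g) z = mpoly_eval f z * mpoly_eval g z"
proof -
  let ?F = "Poly_Mapping.keys f" and ?G = "Poly_Mapping.keys g"
  have "f * g = (\<Sum>\<alpha>\<in>?F. \<Sum>\<beta>\<in>?G.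
      Poly_Mapping.single (\<alpha> + \<beta>) (Poly_Mapping.lookup f \<alpha> * Poly_Mapping.lookup g \<beta>))"
    by (subst mpoly_sum_single_lookup[of f], subst mpoly_sum_single_lookup[of g])
      (simp add: sum_product mult_single)
  then have "mpoly_eval (f * g) z = (\<Sum>\<alpha>\<in>?F. \<Sum>\<beta>\<in>?G.
      Poly_Mapping.lookup f \<alpha> * Poly_Mapping.lookup g \<beta> * monomial_value z (\<alpha> + \<beta>))"
    by (simp add: mpoly_eval_sum)
  then show ?thesis
    by (simp add: mpoly_eval_def sum_product monomial_value_add mult_ac)
qed

lemma mpoly_eval_one [simp]: "mpoly_eval (1::('n::finite, 'k::comm_ring_1) mpoly) z = 1"
proof -
  have "(1::('n, 'k) mpoly) = Poly_Mapping.single 0 1"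
    by (rule poly_mapping_eqI) (simp add: lookup_one lookup_single)
  moreover have "mpoly_eval (Poly_Mapping.single 0 (1::'k)) z = 1"
    by (simp only: mpoly_eval_single monomial_value_zero mult_1)
  ultimately show ?thesis by simp
qed

lemma mpoly_eval_var [simp]: "mpoly_eval (var j) z = z j"
proof -
  have "z i ^ (if j = i then Suc 0 else 0) = (if j = i then z i else 1)" for i
    by simp
  then show ?thesis by (simp add: var_def monomial_value_def lookup_single when_def)
qed

lemma mpoly_eval_max_ideal_one:
  assumes "f \<in> max_ideal_one"
  shows "mpoly_eval f (\<lambda>_. 1) = 0"
proof -
  let ?K = "{f. mpoly_eval f (\<lambda>_. 1) = 0}"
  have "is_ideal ?K"
    unfolding is_ideal_def by (simp add: mpoly_eval_add mpoly_eval_mult)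
  moreover have "range (\<lambda>j. var j - 1) \<subseteq> ?K"
    by (auto simp: mpoly_eval_diff)
  ultimately show ?thesis
    using assms unfolding max_ideal_one_def ideal_gen_def by blast
qed

lemma lookup_torus_act:
  "Poly_Mapping.lookup (torus_act z f) \<alpha> = Poly_Mapping.lookup f \<alpha> * monomial_value z \<alpha>"
  by (auto simp: torus_act_def lookup_mapp when_def monomial_value_def in_keys_iff)

lemma mpoly_eval_torus_act: "mpoly_eval (torus_act z f) (\<lambda>_. 1) = mpoly_eval f z"
proof -
  have "Poly_Mapping.keys (torus_act z f) \<subseteq> Poly_Mapping.keys f"
    by (simp add: torus_act_def keys_mapp_subset)
  then have "mpoly_eval (torus_act z f) (\<lambda>_. 1)
      = (\<Sum>\<alpha>\<in>Poly_Mapping.keys f. Poly_Mapping.lookup (torus_act z f) \<alpha> * monomial_value (\<lambda>_. 1) \<alpha>)"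
    by (intro mpoly_eval_superset) auto
  then show ?thesis
    by (simp add: lookup_torus_act mpoly_eval_def)
qed

lemma torus_act_mult: "torus_act z (torus_act w f) = torus_act (\<lambda>j. z j * w j) f"
  by (rule poly_mapping_eqI)
    (simp add: lookup_torus_act monomial_value_def power_mult_distrib prod.distrib mult_ac)

lemma torus_act_one: "torus_act (\<lambda>_. 1) f = f"
  by (rule poly_mapping_eqI) (simp add: lookup_torus_act)

section \<open>The stabiliser and its annihilator\<close>

definition annihilator ::
    "('m::finite \<Rightarrow> 'n::finite \<Rightarrow> 'k::field) \<Rightarrow> ('m \<Rightarrow> int) set \<Rightarrow> ('n \<Rightarrow> int) set" where
  "annihilator x A = {b. \<forall>a\<in>A. pairing x a b = 1}"

lemma tpow_nonzero: "\<forall>i j. x i j \<noteq> 0 \<Longrightarrow> tpow x a j \<noteq> 0"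
  by (simp add: tpow_def)

lemma tpow_add:
  "\<forall>i j. x i j \<noteq> 0 \<Longrightarrow> tpow x (\<lambda>i. a i + b i) = (\<lambda>j. tpow x a j * tpow x b j)"
  by (simp add: tpow_def power_int_add prod.distrib fun_eq_iff)

lemma tpow_zero: "tpow x (\<lambda>_. 0) = (\<lambda>_. 1)"
  by (simp add: tpow_def fun_eq_iff)

lemma Stab_zero: "(\<lambda>_. 0) \<in> Stab x P"
  by (simp add: Stab_def tpow_zero torus_act_one)

lemma Stab_add:
  assumes x: "\<forall>i j. x i j \<noteq> 0" and a: "a \<in> Stab x P" and b: "b \<in> Stab x P"
  shows "(\<lambda>i. a i + b i) \<in> Stab x P"
proof -
  have "torus_act (tpow x (\<lambda>i. a i + b i)) ` P = torus_act (tpow x a) ` torus_act (tpow x b) ` P"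
    by (simp add: tpow_add[OF x] image_image torus_act_mult)
  also have "\<dots> = P"
    using a b by (simp add: Stab_def)
  finally show ?thesis by (simp add: Stab_def)
qed

lemma mpoly_eval_tpow_Stab:
  assumes "f \<in> P" "a \<in> Stab x P" "P \<subseteq> max_ideal_one"
  shows "mpoly_eval f (tpow x a) = 0"
proof -
  have "torus_act (tpow x a) f \<in> P"
    using assms(1,2) unfolding Stab_def by blast
  then show ?thesis
    using assms(3) mpoly_eval_max_ideal_one mpoly_eval_torus_act by (metis subsetD)
qed

lemma power_int_prod: "(\<Prod>i\<in>I. f i) powi n = (\<Prod>i\<in>I. (f i :: 'k::field) powi n)"
  by (induction I rule: infinite_finite_induct) (auto simp: power_int_mult_distrib)

lemma pairing_tpow: "pairing x a b = (\<Prod>j\<in>UNIV. tpow x a j powi b j)"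
  unfolding pairing_def tpow_def power_int_prod
  by (subst prod.swap) (simp add: power_int_mult)

lemma is_subgroup_annihilator:
  assumes x: "\<forall>i j. x i j \<noteq> 0"
  shows "is_subgroup (annihilator x A)"
proof -
  have "pairing x a (\<lambda>j. b j + b' j) = pairing x a b * pairing x a b'" for a b b'
    unfolding pairing_tpow using tpow_nonzero[OF x] by (simp add: power_int_add prod.distrib)
  moreover have "pairing x a (\<lambda>j. - b j) = inverse (pairing x a b)" for a b
    unfolding pairing_tpow power_int_minus prod_inversef[symmetric] by (simp add: comp_def)
  ultimately show ?thesis
    by (simp add: is_subgroup_def annihilator_def pairing_tpow)
qed

lemma diff_in_annihilator:
  assumes x: "\<forall>i j. x i j \<noteq> 0"
    and eq: "\<And>a. a \<in> A \<Longrightarrow> monomial_value (tpow x a) \<beta> = monomial_value (tpow x a) \<beta>'"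
  shows "(\<lambda>j. int (Poly_Mapping.lookup \<beta> j) - int (Poly_Mapping.lookup \<beta>' j)) \<in> annihilator x A"
  unfolding annihilator_def
proof (intro CollectI ballI)
  fix a assume "a \<in> A"
  have nz: "\<And>j. tpow x a j \<noteq> 0" using tpow_nonzero[OF x] by blast
  have "pairing x a (\<lambda>j. int (Poly_Mapping.lookup \<beta> j) - int (Poly_Mapping.lookup \<beta>' j))
      = monomial_value (tpow x a) \<beta> / monomial_value (tpow x a) \<beta>'"
    unfolding pairing_tpow monomial_value_def using nz by (simp add: power_int_diff prod_dividef)
  also have "\<dots> = 1"
    using eq[OF \<open>a \<in> A\<close>] monomial_value_nonzero[OF nz] by simp
  finally show "pairing x a (\<lambda>j. int (Poly_Mapping.lookup \<beta> j) - int (Poly_Mapping.lookup \<beta>' j)) = 1" .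
qed

lemma monomial_value_tpow_add:
  "\<forall>i j. x i j \<noteq> 0 \<Longrightarrow>
    monomial_value (tpow x (\<lambda>i. a i + b i)) \<beta> = monomial_value (tpow x a) \<beta> * monomial_value (tpow x b) \<beta>"
  by (simp add: tpow_add monomial_value_def power_mult_distrib prod.distrib)

lemma linear_independence_of_characters:
  fixes \<chi> :: "'i \<Rightarrow> 'a \<Rightarrow> 'k::field" and op :: "'a \<Rightarrow> 'a \<Rightarrow> 'a"
  assumes e: "e \<in> A" and closed: "\<And>a b. a \<in> A \<Longrightarrow> b \<in> A \<Longrightarrow> op a b \<in> A"
    and hom: "\<And>\<mu> a b. a \<in> A \<Longrightarrow> b \<in> A \<Longrightarrow> \<chi> \<mu> (op a b) = \<chi> \<mu> a * \<chi> \<mu> b"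
    and unit: "\<And>\<mu>. \<chi> \<mu> e = 1"
    and fin: "finite M"
    and distinct: "\<forall>\<mu>\<in>M. \<forall>\<nu>\<in>M. \<mu> \<noteq> \<nu> \<longrightarrow> (\<exists>a\<in>A. \<chi> \<mu> a \<noteq> \<chi> \<nu> a)"
    and relation: "\<forall>a\<in>A. (\<Sum>\<mu>\<in>M. c \<mu> * \<chi> \<mu> a) = 0"
  shows "\<forall>\<mu>\<in>M. c \<mu> = 0"
  using fin distinct relation
proof (induction M arbitrary: c rule: finite_induct)
  case empty
  then show ?case by simp
next
  case (insert \<nu> F)
  have rel: "\<forall>a\<in>A. (\<Sum>\<mu>\<in>F. c \<mu> * \<chi> \<mu> a) + c \<nu> * \<chi> \<nu> a = 0"
    using insert.prems(2) insert.hyps by (simp add: add.commute)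
  have "c \<mu> = 0" if \<mu>F: "\<mu> \<in> F" for \<mu>
  proof -
    obtain b where b: "b \<in> A" "\<chi> \<mu> b \<noteq> \<chi> \<nu> b"
      using insert.prems(1) insert.hyps(2) \<mu>F by fastforce
    \<comment> \<open>Evaluating the relation at \<open>op a b\<close> and subtracting \<open>\<chi> \<nu> b\<close> times it at \<open>a\<close> kills \<open>\<nu>\<close>.\<close>
    have "\<forall>a\<in>A. (\<Sum>\<mu>'\<in>F. (c \<mu>' * (\<chi> \<mu>' b - \<chi> \<nu> b)) * \<chi> \<mu>' a) = 0"
    proof
      fix a assume a: "a \<in> A"
      have "(\<Sum>\<mu>'\<in>F. (c \<mu>' * (\<chi> \<mu>' b - \<chi> \<nu> b)) * \<chi> \<mu>' a)
          = ((\<Sum>\<mu>'\<in>F. c \<mu>' * \<chi> \<mu>' (op a b)) + c \<nu> * \<chi> \<nu> (op a b))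
            - \<chi> \<nu> b * ((\<Sum>\<mu>'\<in>F. c \<mu>' * \<chi> \<mu>' a) + c \<nu> * \<chi> \<nu> a)"
        using hom[OF a b(1)]
        by (simp add: algebra_simps sum_distrib_left sum_subtractf)
      also have "\<dots> = 0"
        using rel a closed[OF a b(1)] by simp
      finally show "(\<Sum>\<mu>'\<in>F. (c \<mu>' * (\<chi> \<mu>' b - \<chi> \<nu> b)) * \<chi> \<mu>' a) = 0" .
    qed
    then have "\<forall>\<mu>'\<in>F. c \<mu>' * (\<chi> \<mu>' b - \<chi> \<nu> b) = 0"
      using insert.IH[of "\<lambda>\<mu>'. c \<mu>' * (\<chi> \<mu>' b - \<chi> \<nu> b)"] insert.prems(1) by blast
    then have "c \<mu> * (\<chi> \<mu> b - \<chi> \<nu> b) = 0"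
      using \<mu>F by blast
    then show "c \<mu> = 0" using b by simp
  qed
  moreover have "c \<nu> = 0"
    using rel e unit[of \<nu>] calculation by force
  ultimately show ?case by simp
qed

section \<open>Algebraic independence modulo an ideal\<close>

definition power_product :: "(nat \<Rightarrow> 'a::comm_monoid_mult) \<Rightarrow> nat \<Rightarrow> (nat \<Rightarrow> nat) \<Rightarrow> 'a" where
  "power_product w s \<mu> = (\<Prod>i<s. w i ^ \<mu> i)"

definition exponents_below :: "nat \<Rightarrow> (nat \<Rightarrow> nat) set" where
  "exponents_below s = {\<mu>. \<forall>i\<ge>s. \<mu> i = 0}"

definition mpoly_const :: "'k \<Rightarrow> ('n, 'k::comm_ring_1) mpoly" where
  "mpoly_const a = Poly_Mapping.single 0 a"

lemma mpoly_const_zero [simp]: "mpoly_const 0 = 0"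
  by (simp add: mpoly_const_def)

text \<open>A polynomial in \<open>s\<close> variables is encoded by a finite set of exponent vectors and a
  coefficient function.\<close>

definition alg_indep_mod :: "('n, 'k::comm_ring_1) mpoly set \<Rightarrow> (nat \<Rightarrow> ('n, 'k) mpoly) \<Rightarrow> nat \<Rightarrow> bool" where
  "alg_indep_mod Q w s \<longleftrightarrow> (\<forall>M c. finite M \<longrightarrow> M \<subseteq> exponents_below s \<longrightarrow>
      (\<Sum>\<mu>\<in>M. mpoly_const (c \<mu>) * power_product w s \<mu>) \<in> Q \<longrightarrow> (\<forall>\<mu>\<in>M. c \<mu> = 0))"

lemma alg_indep_modD:
  assumes "alg_indep_mod Q w s" "finite M" "M \<subseteq> exponents_below s"
    "(\<Sum>\<mu>\<in>M. mpoly_const (c \<mu>) * power_product w s \<mu>) \<in> Q" "\<mu> \<in> M"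
  shows "c \<mu> = 0"
  using assms unfolding alg_indep_mod_def by blast

lemma power_product_Suc_upd: "power_product (w(s := g)) (Suc s) \<mu> = power_product w s \<mu> * g ^ \<mu> s"
proof -
  have "(\<Prod>i<s. (w(s := g)) i ^ \<mu> i) = (\<Prod>i<s. w i ^ \<mu> i)"
    by (rule prod.cong) auto
  then show ?thesis by (simp add: power_product_def)
qed

lemma power_product_upd: "power_product w s (\<mu>(s := e)) = power_product w s \<mu>"
  unfolding power_product_def by (rule prod.cong) auto

lemma alg_indep_mod_fixed_last:
  assumes ind: "alg_indep_mod Q w s" and fin: "finite M" and M: "M \<subseteq> exponents_below (Suc s)"
    and last: "\<And>\<mu>. \<mu> \<in> M \<Longrightarrow> \<mu> s = e"
    and rel: "(\<Sum>\<mu>\<in>M. mpoly_const (c \<mu>) * power_product w s \<mu>) \<in> Q"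
  shows "\<forall>\<mu>\<in>M. c \<mu> = 0"
proof -
  define h where "h \<mu> = \<mu>(s := 0)" for \<mu> :: "nat \<Rightarrow> nat"
  have h_inverse: "(h \<mu>)(s := e) = \<mu>" if "\<mu> \<in> M" for \<mu>
    using last[OF that] by (auto simp: h_def)
  have inj: "inj_on h M"
  proof (rule inj_onI)
    fix \<mu> \<nu> assume "\<mu> \<in> M" "\<nu> \<in> M" "h \<mu> = h \<nu>"
    have "\<mu> = (h \<mu>)(s := e)"
      by (rule h_inverse[OF \<open>\<mu> \<in> M\<close>, symmetric])
    also have "\<dots> = (h \<nu>)(s := e)"
      by (simp only: \<open>h \<mu> = h \<nu>\<close>)
    also have "\<dots> = \<nu>"
      by (rule h_inverse[OF \<open>\<nu> \<in> M\<close>])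
    finally show "\<mu> = \<nu>" .
  qed
  have "(\<Sum>\<nu>\<in>h ` M. mpoly_const (c (\<nu>(s := e))) * power_product w s \<nu>)
      = (\<Sum>\<mu>\<in>M. mpoly_const (c \<mu>) * power_product w s \<mu>)"
    unfolding sum.reindex[OF inj] comp_def
  proof (rule sum.cong)
    fix \<mu> assume "\<mu> \<in> M"
    then show "mpoly_const (c ((h \<mu>)(s := e))) * power_product w s (h \<mu>)
        = mpoly_const (c \<mu>) * power_product w s \<mu>"
      unfolding h_inverse[OF \<open>\<mu> \<in> M\<close>] by (simp only: h_def power_product_upd)
  qed simp
  then have "(\<Sum>\<nu>\<in>h ` M. mpoly_const (c (\<nu>(s := e))) * power_product w s \<nu>) \<in> Q"
    using rel by simp
  moreover have "finite (h ` M)" and "h ` M \<subseteq> exponents_below s"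
    using fin M by (auto simp: exponents_below_def h_def)
  ultimately have vanish: "\<forall>\<nu>\<in>h ` M. c (\<nu>(s := e)) = 0"
    using alg_indep_modD[OF ind, of "h ` M" "\<lambda>\<nu>. c (\<nu>(s := e))"] by blast
  show ?thesis
  proof
    fix \<mu> assume "\<mu> \<in> M"
    then have "c ((h \<mu>)(s := e)) = 0"
      using vanish by blast
    then show "c \<mu> = 0"
      using h_inverse[OF \<open>\<mu> \<in> M\<close>] by simp
  qed
qed

lemma alg_indep_mod_extend:
  assumes Q: "is_prime_ideal Q" and Q': "is_ideal Q'" and sub: "Q \<subseteq> Q'"
    and ind: "alg_indep_mod Q' w s" and g: "g \<in> Q'" "g \<notin> Q"
  shows "alg_indep_mod Q (w(s := g)) (Suc s)"
  unfolding alg_indep_mod_def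
proof (intro allI impI)
  fix M c
  assume fin: "finite M" and M: "M \<subseteq> exponents_below (Suc s)"
    and rel: "(\<Sum>\<mu>\<in>M. mpoly_const (c \<mu>) * power_product (w(s := g)) (Suc s) \<mu>) \<in> Q"
  define M' where "M' = {\<mu>\<in>M. c \<mu> \<noteq> 0}"
  define f where "f \<mu> = mpoly_const (c \<mu>) * power_product w s \<mu>" for \<mu>
  have fin': "finite M'" and M': "M' \<subseteq> exponents_below (Suc s)"
    using fin M by (auto simp: M'_def)
  have "M' = {}"
  proof (rule ccontr)
    assume "M' \<noteq> {}"
    define e where "e = Min ((\<lambda>\<mu>. \<mu> s) ` M')"
    have e_le: "e \<le> \<mu> s" if "\<mu> \<in> M'" for \<mu>
      using fin' that by (simp add: e_def)
    have "e \<in> (\<lambda>\<mu>. \<mu> s) ` M'"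
      unfolding e_def using fin' \<open>M' \<noteq> {}\<close> by (intro Min_in) auto
    then obtain \<mu>0 where \<mu>0: "\<mu>0 \<in> M'" "\<mu>0 s = e"
      by auto
    \<comment> \<open>Divide by \<open>g\<^sup>e\<close>, which is allowed as \<open>Q\<close> is prime and \<open>g \<notin> Q\<close>; modulo \<open>Q' \<ni> g\<close> only
      the terms with \<open>\<mu> s = e\<close> survive.\<close>
    have "(\<Sum>\<mu>\<in>M. mpoly_const (c \<mu>) * power_product (w(s := g)) (Suc s) \<mu>)
        = (\<Sum>\<mu>\<in>M. f \<mu> * g ^ \<mu> s)"
      by (simp add: f_def power_product_Suc_upd mult.assoc)
    also have "\<dots> = (\<Sum>\<mu>\<in>M'. f \<mu> * g ^ \<mu> s)"
      using fin by (intro sum.mono_neutral_right) (auto simp: M'_def f_def)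
    also have "\<dots> = g ^ e * (\<Sum>\<mu>\<in>M'. f \<mu> * g ^ (\<mu> s - e))"
      unfolding sum_distrib_left
      by (rule sum.cong) (simp_all add: e_le power_add[symmetric] mult_ac)
    finally have "(\<Sum>\<mu>\<in>M'. f \<mu> * g ^ (\<mu> s - e)) \<in> Q"
      using rel is_prime_ideal_cancel_power[OF Q g(2)] by simp
    then have "(\<Sum>\<mu>\<in>{\<mu>\<in>M'. \<mu> s - e = 0}. f \<mu>) \<in> Q'"
      using is_ideal_lowest_slice[OF Q' g(1) fin', of f "\<lambda>\<mu>. \<mu> s - e"] sub by blast
    moreover have "{\<mu>\<in>M'. \<mu> s - e = 0} = {\<mu>\<in>M'. \<mu> s = e}"
      using e_le by force
    ultimately have "\<forall>\<mu>\<in>{\<mu>\<in>M'. \<mu> s = e}. c \<mu> = 0"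
      using fin' M' unfolding f_def by (intro alg_indep_mod_fixed_last[OF ind]) auto
    then show False
      using \<mu>0 by (auto simp: M'_def)
  qed
  then show "\<forall>\<mu>\<in>M. c \<mu> = 0"
    by (auto simp: M'_def)
qed

lemma alg_indep_mod_chain:
  assumes "\<forall>i\<le>k. is_prime_ideal (C i)" and "\<forall>i<k. C i \<subset> C (Suc i)"
    and "alg_indep_mod (C k) w s"
  shows "\<exists>w'. alg_indep_mod (C 0) w' (s + k)"
  using assms
proof (induction k arbitrary: w s)
  case 0
  then show ?case by auto
next
  case (Suc k)
  obtain g where g: "g \<in> C (Suc k)" "g \<notin> C k"
    using Suc.prems(2) by blast
  have "alg_indep_mod (C k) (w(s := g)) (Suc s)"
  proof (rule alg_indep_mod_extend)
    show "is_prime_ideal (C k)" "is_ideal (C (Suc k))"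
      using Suc.prems(1) by (auto simp: is_prime_ideal_def)
    show "C k \<subseteq> C (Suc k)"
      using Suc.prems(2) by blast
  qed (use Suc.prems(3) g in auto)
  moreover have "\<forall>i\<le>k. is_prime_ideal (C i)" "\<forall>i<k. C i \<subset> C (Suc i)"
    using Suc.prems(1,2) by auto
  ultimately obtain w' where "alg_indep_mod (C 0) w' (Suc s + k)"
    using Suc.IH by blast
  then show ?case by auto
qed

lemma alg_indep_mod_le:
  assumes ind: "alg_indep_mod Q w s" and le: "s' \<le> s"
  shows "alg_indep_mod Q w s'"
  unfolding alg_indep_mod_def
proof (intro allI impI)
  fix M c
  assume fin: "finite M" and M: "M \<subseteq> exponents_below s'"
    and rel: "(\<Sum>\<mu>\<in>M. mpoly_const (c \<mu>) * power_product w s' \<mu>) \<in> Q"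
  have "power_product w s \<mu> = power_product w s' \<mu>" if "\<mu> \<in> M" for \<mu>
    unfolding power_product_def
    by (rule prod.mono_neutral_right) (use le M that in \<open>auto simp: exponents_below_def\<close>)
  then have "(\<Sum>\<mu>\<in>M. mpoly_const (c \<mu>) * power_product w s \<mu>) \<in> Q"
    using rel by (simp cong: sum.cong)
  moreover have "M \<subseteq> exponents_below s"
    using M le by (auto simp: exponents_below_def)
  ultimately show "\<forall>\<mu>\<in>M. c \<mu> = 0"
    using alg_indep_modD[OF ind fin] by blast
qed

section \<open>Transcendence degree of the polynomial ring\<close>

definition bounded_exponents :: "nat \<Rightarrow> ('n \<Rightarrow>\<^sub>0 nat) set" where
  "bounded_exponents N = {\<alpha>. \<forall>j. Poly_Mapping.lookup \<alpha> j \<le> N}"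

lemma bounded_exponents_mono: "N \<le> N' \<Longrightarrow> bounded_exponents N \<subseteq> bounded_exponents N'"
  by (auto simp: bounded_exponents_def intro: order_trans)

lemma keys_mult_bounded_exponents:
  assumes "Poly_Mapping.keys f \<subseteq> bounded_exponents a" "Poly_Mapping.keys g \<subseteq> bounded_exponents b"
  shows "Poly_Mapping.keys (f * g) \<subseteq> bounded_exponents (a + b)"
proof
  fix \<gamma> assume "\<gamma> \<in> Poly_Mapping.keys (f * g)"
  then obtain \<alpha> \<beta> where "\<gamma> = \<alpha> + \<beta>" "\<alpha> \<in> Poly_Mapping.keys f" "\<beta> \<in> Poly_Mapping.keys g"
    using keys_mult by blast
  moreover have "\<forall>j. Poly_Mapping.lookup \<alpha> j \<le> a" "\<forall>j. Poly_Mapping.lookup \<beta> j \<le> b"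
    using assms calculation by (auto simp: bounded_exponents_def)
  ultimately show "\<gamma> \<in> bounded_exponents (a + b)"
    by (simp add: bounded_exponents_def lookup_add add_mono)
qed

lemma keys_power_bounded_exponents:
  assumes "Poly_Mapping.keys (f :: ('n, 'k::comm_ring_1) mpoly) \<subseteq> bounded_exponents a"
  shows "Poly_Mapping.keys (f ^ m) \<subseteq> bounded_exponents (m * a)"
proof (induction m)
  case 0
  then show ?case by (auto simp: bounded_exponents_def)
next
  case (Suc m)
  then show ?case
    using keys_mult_bounded_exponents[OF assms Suc.IH] by (simp add: add.commute)
qed

lemma keys_prod_bounded_exponents:
  fixes g :: "'i \<Rightarrow> ('n, 'k::comm_ring_1) mpoly"
  assumes "finite I" "\<And>i. i \<in> I \<Longrightarrow> Poly_Mapping.keys (g i) \<subseteq> bounded_exponents (b i)"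
  shows "Poly_Mapping.keys (\<Prod>i\<in>I. g i) \<subseteq> bounded_exponents (\<Sum>i\<in>I. b i)"
  using assms
proof (induction I rule: finite_induct)
  case empty
  then show ?case by (auto simp: bounded_exponents_def)
next
  case (insert i I)
  then show ?case
    using keys_mult_bounded_exponents[of "g i" "b i" "prod g I" "sum b I"] by simp
qed

lemma keys_subset_bounded_exponents:
  "\<exists>N. Poly_Mapping.keys (f :: ('n::finite \<Rightarrow>\<^sub>0 nat) \<Rightarrow>\<^sub>0 'k::zero) \<subseteq> bounded_exponents N"
proof
  let ?N = "\<Sum>\<beta>\<in>Poly_Mapping.keys f. \<Sum>j\<in>UNIV. Poly_Mapping.lookup \<beta> j"
  have "Poly_Mapping.lookup \<alpha> j \<le> ?N" if "\<alpha> \<in> Poly_Mapping.keys f" for \<alpha> j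
    using member_le_sum[of j UNIV "Poly_Mapping.lookup \<alpha>"]
      member_le_sum[OF that, of "\<lambda>\<beta>. \<Sum>j\<in>UNIV. Poly_Mapping.lookup \<beta> j"] by simp
  then show "Poly_Mapping.keys f \<subseteq> bounded_exponents ?N"
    by (auto simp: bounded_exponents_def)
qed

lemma bounded_exponents_lookup:
  "inj_on Poly_Mapping.lookup (bounded_exponents N :: ('n \<Rightarrow>\<^sub>0 nat) set)"
  "Poly_Mapping.lookup ` (bounded_exponents N :: ('n \<Rightarrow>\<^sub>0 nat) set) \<subseteq> (\<Pi>\<^sub>E j\<in>UNIV. {..N})"
  by (auto intro: inj_onI poly_mapping_eqI simp: bounded_exponents_def)

lemma finite_bounded_exponents: "finite (bounded_exponents N :: ('n::finite \<Rightarrow>\<^sub>0 nat) set)"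
  by (rule inj_on_finite[OF bounded_exponents_lookup]) (simp add: finite_PiE)

lemma card_bounded_exponents:
  "card (bounded_exponents N :: ('n::finite \<Rightarrow>\<^sub>0 nat) set) \<le> Suc N ^ card (UNIV :: 'n set)"
proof -
  have "card (bounded_exponents N :: ('n \<Rightarrow>\<^sub>0 nat) set) \<le> card (\<Pi>\<^sub>E j\<in>(UNIV :: 'n set). {..N})"
    by (rule card_inj_on_le[OF bounded_exponents_lookup]) (simp add: finite_PiE)
  then show ?thesis
    by (simp add: card_PiE)
qed

lemma card_bounded_exponents_below:
  "finite {\<mu> \<in> exponents_below s. \<forall>i. \<mu> i \<le> d}"
  "card {\<mu> \<in> exponents_below s. \<forall>i. \<mu> i \<le> d} = Suc d ^ s"
proof -
  let ?Box = "{\<mu> \<in> exponents_below s. \<forall>i. \<mu> i \<le> d}"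
  have "bij_betw (\<lambda>\<mu>. restrict \<mu> {..<s}) ?Box (\<Pi>\<^sub>E i\<in>{..<s}. {..d})"
  proof (rule bij_betw_byWitness[where f' = "\<lambda>f i. if i < s then f i else 0"])
    show "\<forall>\<mu>\<in>?Box. (\<lambda>i. if i < s then restrict \<mu> {..<s} i else 0) = \<mu>"
      by (auto simp: exponents_below_def fun_eq_iff)
    show "\<forall>f\<in>\<Pi>\<^sub>E i\<in>{..<s}. {..d}. restrict (\<lambda>i. if i < s then f i else 0) {..<s} = f"
      by (auto simp: fun_eq_iff PiE_def extensional_def)
    show "(\<lambda>\<mu>. restrict \<mu> {..<s}) ` ?Box \<subseteq> (\<Pi>\<^sub>E i\<in>{..<s}. {..d})"
      by (intro image_subsetI) (auto simp: restrict_PiE_iff)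
    show "(\<lambda>f i. if i < s then f i else 0) ` (\<Pi>\<^sub>E i\<in>{..<s}. {..d}) \<subseteq> ?Box"
      by (auto simp: exponents_below_def PiE_def Pi_def)
  qed
  then show "finite ?Box" "card ?Box = Suc d ^ s"
    by (simp_all add: bij_betw_finite finite_PiE bij_betw_same_card card_PiE)
qed

definition mpoly_scale :: "'k::field \<Rightarrow> ('n, 'k) mpoly \<Rightarrow> ('n, 'k) mpoly" where
  "mpoly_scale a f = mpoly_const a * f"

interpretation mpoly_vs: vector_space "mpoly_scale :: 'k::field \<Rightarrow> ('n, 'k) mpoly \<Rightarrow> ('n, 'k) mpoly"
  by unfold_locales (simp_all add: mpoly_scale_def mpoly_const_def distrib_left distrib_right
      single_add mult.assoc[symmetric] mult_single)

lemma mpoly_in_span_monomials: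
  assumes "Poly_Mapping.keys (f :: ('n, 'k::field) mpoly) \<subseteq> S"
  shows "f \<in> mpoly_vs.span ((\<lambda>\<alpha>. Poly_Mapping.single \<alpha> 1) ` S)"
proof -
  have "f = (\<Sum>\<alpha>\<in>Poly_Mapping.keys f. mpoly_scale (Poly_Mapping.lookup f \<alpha>) (Poly_Mapping.single \<alpha> 1))"
    by (subst mpoly_sum_single_lookup) (simp add: mpoly_scale_def mpoly_const_def mult_single)
  also have "\<dots> \<in> mpoly_vs.span ((\<lambda>\<alpha>. Poly_Mapping.single \<alpha> 1) ` S)"
    by (intro mpoly_vs.span_sum mpoly_vs.span_scale mpoly_vs.span_base) (use assms in auto)
  finally show ?thesis .
qed

lemma alg_indep_mod_inj_power_product:
  fixes w :: "nat \<Rightarrow> ('n, 'k::field) mpoly"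
  assumes Q: "0 \<in> Q" and ind: "alg_indep_mod Q w s"
  shows "inj_on (power_product w s) (exponents_below s)"
proof (rule inj_onI, rule ccontr)
  fix \<mu> \<nu>
  assume "\<mu> \<in> exponents_below s" "\<nu> \<in> exponents_below s"
    and eq: "power_product w s \<mu> = power_product w s \<nu>" and ne: "\<mu> \<noteq> \<nu>"
  define c where "c \<kappa> = (if \<kappa> = \<mu> then 1 else - 1 :: 'k)" for \<kappa>
  have "(\<Sum>\<kappa>\<in>{\<mu>, \<nu>}. mpoly_const (c \<kappa>) * power_product w s \<kappa>) = 0"
    using eq ne by (simp add: c_def mpoly_const_def single_uminus)
  then have "c \<mu> = 0"
    using Q \<open>\<mu> \<in> exponents_below s\<close> \<open>\<nu> \<in> exponents_below s\<close>
    by (intro alg_indep_modD[OF ind, of "{\<mu>, \<nu>}" c \<mu>]) auto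
  then show False by (simp add: c_def)
qed

lemma alg_indep_mod_independent_power_products:
  fixes w :: "nat \<Rightarrow> ('n, 'k::field) mpoly"
  assumes Q: "0 \<in> Q" and ind: "alg_indep_mod Q w s" and M: "M \<subseteq> exponents_below s"
  shows "mpoly_vs.independent (power_product w s ` M)"
  unfolding mpoly_vs.independent_explicit_finite_subsets
proof (intro allI impI ballI)
  fix T u v
  assume T: "T \<subseteq> power_product w s ` M" and fin: "finite T"
    and rel: "(\<Sum>v\<in>T. mpoly_scale (u v) v) = 0" and v: "v \<in> T"
  define N where "N = {\<mu>\<in>M. power_product w s \<mu> \<in> T}"
  have T_eq: "T = power_product w s ` N"
    using T by (auto simp: N_def)
  have inj: "inj_on (power_product w s) N"
    by (rule inj_on_subset[OF alg_indep_mod_inj_power_product[OF Q ind]]) (use M in \<open>auto simp: N_def\<close>)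
  have "finite N"
    using fin inj by (simp add: T_eq finite_image_iff)
  moreover have "N \<subseteq> exponents_below s"
    using M by (auto simp: N_def)
  moreover have "(\<Sum>\<mu>\<in>N. mpoly_const (u (power_product w s \<mu>)) * power_product w s \<mu>) \<in> Q"
    using rel Q by (simp add: T_eq sum.reindex[OF inj] mpoly_scale_def)
  ultimately have "\<forall>\<mu>\<in>N. u (power_product w s \<mu>) = 0"
    using alg_indep_modD[OF ind, of N "\<lambda>\<mu>. u (power_product w s \<mu>)"] by blast
  then show "u v = 0"
    using v T_eq by auto
qed

lemma dimension_count_inequality:
  fixes K n :: nat
  assumes "K \<ge> 1"
  shows "(K * K ^ n + 1) ^ n < (K ^ n + 1) ^ Suc n"
proof -
  have "(K * K ^ n + 1) ^ n \<le> (K * (K ^ n + 1)) ^ n"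
    using assms by (intro power_mono) simp_all
  also have "\<dots> = K ^ n * (K ^ n + 1) ^ n"
    by (simp only: power_mult_distrib)
  also have "\<dots> < (K ^ n + 1) * (K ^ n + 1) ^ n"
    using assms by simp
  finally show ?thesis by simp
qed

lemma keys_power_product_bounded_exponents:
  fixes w :: "nat \<Rightarrow> ('n, 'k::comm_ring_1) mpoly"
  assumes w: "\<And>i. i < s \<Longrightarrow> Poly_Mapping.keys (w i) \<subseteq> bounded_exponents D"
    and \<mu>: "\<And>i. \<mu> i \<le> d"
  shows "Poly_Mapping.keys (power_product w s \<mu>) \<subseteq> bounded_exponents (s * D * d)"
proof -
  have "Poly_Mapping.keys (power_product w s \<mu>) \<subseteq> bounded_exponents (\<Sum>i<s. \<mu> i * D)"
    unfolding power_product_def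
    by (rule keys_prod_bounded_exponents) (simp_all add: keys_power_bounded_exponents w)
  moreover have "(\<Sum>i<s. \<mu> i * D) \<le> (\<Sum>i<s. d * D)"
    by (rule sum_mono) (simp add: \<mu>)
  ultimately have "Poly_Mapping.keys (power_product w s \<mu>) \<subseteq> bounded_exponents (s * (d * D))"
    using bounded_exponents_mono by fastforce
  then show ?thesis
    by (simp add: mult_ac)
qed

text \<open>The \<open>(d + 1)\<^sup>s\<close> power products with exponents \<open>\<le> d\<close> are linearly independent and lie in the
  span of the monomials with exponents \<open>\<le> s D d\<close>.\<close>

lemma alg_indep_mod_card_bound:
  fixes w :: "nat \<Rightarrow> ('n::finite, 'k::field) mpoly"
  assumes Q: "0 \<in> Q" and ind: "alg_indep_mod Q w s"
    and w: "\<And>i. i < s \<Longrightarrow> Poly_Mapping.keys (w i) \<subseteq> bounded_exponents D"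
  shows "Suc d ^ s \<le> Suc (s * D * d) ^ card (UNIV :: 'n set)"
proof -
  define Box where "Box = {\<mu> \<in> exponents_below s. \<forall>i. \<mu> i \<le> d}"
  define E where "E = (\<lambda>\<alpha>. Poly_Mapping.single \<alpha> (1::'k)) `
    (bounded_exponents (s * D * d) :: ('n \<Rightarrow>\<^sub>0 nat) set)"
  have Box: "Box \<subseteq> exponents_below s"
    by (auto simp: Box_def)
  have "mpoly_vs.independent (power_product w s ` Box)"
    by (rule alg_indep_mod_independent_power_products[OF Q ind Box])
  moreover have "power_product w s ` Box \<subseteq> mpoly_vs.span E"
    using mpoly_in_span_monomials[OF keys_power_product_bounded_exponents[OF w]]
    by (auto simp: E_def Box_def)
  moreover have "finite E"
    by (simp add: E_def finite_bounded_exponents)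
  ultimately have "card (power_product w s ` Box) \<le> card E"
    using mpoly_vs.independent_span_bound by blast
  moreover have "card (power_product w s ` Box) = Suc d ^ s"
    using card_image[OF inj_on_subset[OF alg_indep_mod_inj_power_product[OF Q ind] Box]]
      card_bounded_exponents_below(2)
    by (simp add: Box_def)
  moreover have "card E \<le> Suc (s * D * d) ^ card (UNIV :: 'n set)"
    using card_image_le[OF finite_bounded_exponents] card_bounded_exponents
    unfolding E_def by (rule order_trans)
  ultimately show ?thesis
    by linarith
qed

lemma uniform_bounded_exponents:
  fixes w :: "nat \<Rightarrow> ('n::finite, 'k::zero) mpoly"
  shows "\<exists>D\<ge>1. \<forall>i<s. Poly_Mapping.keys (w i) \<subseteq> bounded_exponents D"
proof -
  obtain a where a: "\<forall>i. Poly_Mapping.keys (w i) \<subseteq> bounded_exponents (a i)"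
    using choice[of "\<lambda>i N. Poly_Mapping.keys (w i) \<subseteq> bounded_exponents N"] keys_subset_bounded_exponents
    by blast
  have "a i \<le> Suc (\<Sum>i<s. a i)" if "i < s" for i
    using that by (intro le_SucI member_le_sum) auto
  then show ?thesis
    using a bounded_exponents_mono by (metis le_add1 plus_1_eq_Suc subset_trans)
qed

lemma not_alg_indep_mod_Suc_card:
  fixes w :: "nat \<Rightarrow> ('n::finite, 'k::field) mpoly"
  assumes Q: "0 \<in> Q"
  shows "\<not> alg_indep_mod Q w (Suc (card (UNIV :: 'n set)))"
proof
  define n where "n = card (UNIV :: 'n set)"
  assume "alg_indep_mod Q w (Suc (card (UNIV :: 'n set)))"
  then have ind: "alg_indep_mod Q w (Suc n)"
    by (simp add: n_def)
  obtain D where "D \<ge> 1" and w: "\<forall>i<Suc n. Poly_Mapping.keys (w i) \<subseteq> bounded_exponents D"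
    using uniform_bounded_exponents by blast
  define K where "K = Suc n * D"
  have "Suc (K ^ n) ^ Suc n \<le> Suc (K * K ^ n) ^ n"
    using alg_indep_mod_card_bound[OF Q ind, of D "K ^ n"] w by (simp add: K_def n_def)
  moreover have "(K * K ^ n + 1) ^ n < (K ^ n + 1) ^ Suc n"
    using \<open>D \<ge> 1\<close> by (intro dimension_count_inequality) (simp add: K_def)
  ultimately show False
    by simp
qed

section \<open>Sublattices of \<open>\<int>\<^sup>n\<close>\<close>

definition meets_coordinate_subspace_trivially :: "('n \<Rightarrow> int) set \<Rightarrow> 'n set \<Rightarrow> bool" where
  "meets_coordinate_subspace_trivially B J \<longleftrightarrow> (\<forall>b\<in>B. (\<forall>j. j \<notin> J \<longrightarrow> b j = 0) \<longrightarrow> (\<forall>j. b j = 0))"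

lemma Z_indep_family_diagonal:
  assumes fin: "finite L" and v: "\<And>j. j \<in> L \<Longrightarrow> v j \<in> B"
    and diag: "\<And>j. j \<in> L \<Longrightarrow> v j j \<noteq> 0"
    and off_diag: "\<And>j j'. j \<in> L \<Longrightarrow> j' \<in> L \<Longrightarrow> j' \<noteq> j \<Longrightarrow> v j j' = 0"
  shows "Z_indep_family B (card L)"
proof -
  obtain e where e: "bij_betw e {0..<card L} L"
    using ex_bij_betw_nat_finite[OF fin] by blast
  have eL: "e i \<in> L" if "i < card L" for i
    using e that by (auto simp: bij_betw_def)
  have e_inj: "e i = e k \<longleftrightarrow> i = k" if "i < card L" "k < card L" for i k
    using e that by (auto simp: bij_betw_def inj_on_def)
  show ?thesis
    unfolding Z_indep_family_def
  proof (intro exI conjI allI impI)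
    fix i assume "i < card L"
    then show "v (e i) \<in> B" by (simp add: eL v)
  next
    fix c :: "nat \<Rightarrow> int" and k
    assume rel: "\<forall>j. (\<Sum>i<card L. c i * v (e i) j) = 0" and k: "k < card L"
    have "(\<Sum>i<card L. c i * v (e i) (e k)) = c k * v (e k) (e k)"
      using k by (subst sum.remove[of _ k]) (auto simp: eL e_inj off_diag intro!: sum.neutral)
    then show "c k = 0"
      using rel diag[OF eL[OF k]] by simp
  qed
qed

lemma exists_coordinate_set_meeting_trivially:
  fixes B :: "('n::finite \<Rightarrow> int) set"
  assumes not_indep: "\<not> Z_indep_family B r"
  shows "\<exists>J. card (UNIV :: 'n set) < card J + r \<and> meets_coordinate_subspace_trivially B J"
proof -
  let ?trivial = "meets_coordinate_subspace_trivially B"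
  obtain J where J: "?trivial J" and maximal: "\<And>J'. ?trivial J' \<Longrightarrow> card J' \<le> card J"
    using ex_has_greatest_nat[of ?trivial "{}" card "Suc (card (UNIV :: 'n set))"]
    by (auto simp: meets_coordinate_subspace_trivially_def card_mono less_Suc_eq_le)
  have "\<exists>b\<in>B. (\<forall>i. i \<notin> insert j J \<longrightarrow> b i = 0) \<and> b j \<noteq> 0" if "j \<notin> J" for j
  proof -
    have "\<not> ?trivial (insert j J)"
      using maximal[of "insert j J"] that by auto
    then obtain b where b: "b \<in> B" "\<forall>i. i \<notin> insert j J \<longrightarrow> b i = 0" "\<exists>i. b i \<noteq> 0"
      unfolding meets_coordinate_subspace_trivially_def by blast
    then have "b j \<noteq> 0"
      using J unfolding meets_coordinate_subspace_trivially_def by (metis insertE)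
    with b show ?thesis by blast
  qed
  then obtain v where v: "\<And>j. j \<notin> J \<Longrightarrow> v j \<in> B \<and> (\<forall>i. i \<notin> insert j J \<longrightarrow> v j i = 0) \<and> v j j \<noteq> 0"
    by metis
  have "card (UNIV :: 'n set) < card J + r"
  proof (rule ccontr)
    assume "\<not> ?thesis"
    then have "r \<le> card (- J)"
      using card_Diff_subset[of J UNIV] by (simp add: Compl_eq_Diff_UNIV)
    then obtain L where L: "L \<subseteq> - J" "card L = r" "finite L"
      by (meson obtain_subset_with_card_n finite)
    have "Z_indep_family B (card L)"
      by (rule Z_indep_family_diagonal[of L v]) (use L v in auto)
    then show False
      using not_indep L(2) by simp
  qed
  with J show ?thesis by blast
qed

section \<open>Variables that stay independent modulo \<open>P\<close>\<close>

lemma var_power: "(var j :: ('n, 'k::comm_ring_1) mpoly) ^ m = Poly_Mapping.single (Poly_Mapping.single j m) 1"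
  by (induction m) (simp_all add: var_def mult_single single_add[symmetric] add.commute)

definition var_exponents :: "(nat \<Rightarrow> 'n) \<Rightarrow> nat \<Rightarrow> (nat \<Rightarrow> nat) \<Rightarrow> 'n \<Rightarrow>\<^sub>0 nat" where
  "var_exponents e s \<mu> = (\<Sum>i<s. Poly_Mapping.single (e i) (\<mu> i))"

lemma power_product_var:
  "power_product (\<lambda>i. var (e i) :: ('n, 'k::comm_ring_1) mpoly) s \<mu>
    = Poly_Mapping.single (var_exponents e s \<mu>) 1"
proof -
  have "(\<Prod>i\<in>I. Poly_Mapping.single (f i) (1::'k)) = Poly_Mapping.single (\<Sum>i\<in>I. f i) 1"
    for I and f :: "nat \<Rightarrow> 'n \<Rightarrow>\<^sub>0 nat"
    by (induction I rule: infinite_finite_induct) (auto simp: mult_single)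
  then show ?thesis
    by (simp add: power_product_def var_power var_exponents_def)
qed

lemma lookup_var_exponents:
  assumes "inj_on e {..<s}" "i < s"
  shows "Poly_Mapping.lookup (var_exponents e s \<mu>) (e i) = \<mu> i"
proof -
  have "Poly_Mapping.lookup (var_exponents e s \<mu>) (e i) = (\<Sum>i'<s. if i' = i then \<mu> i' else 0)"
    unfolding var_exponents_def lookup_sum
    by (rule sum.cong) (use assms in \<open>auto simp: lookup_single when_def inj_on_def\<close>)
  also have "\<dots> = \<mu> i"
    using assms(2) by (subst sum.delta) auto
  finally show ?thesis .
qed

lemma lookup_var_exponents_notin:
  "j \<notin> e ` {..<s} \<Longrightarrow> Poly_Mapping.lookup (var_exponents e s \<mu>) j = 0"
  by (auto simp: var_exponents_def lookup_sum lookup_single when_def intro!: sum.neutral)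

lemma inj_on_var_exponents:
  assumes e: "inj_on e {..<s}"
  shows "inj_on (var_exponents e s) (exponents_below s)"
proof (rule inj_onI, rule ext)
  fix \<mu> \<nu> i
  assume \<mu>: "\<mu> \<in> exponents_below s" and \<nu>: "\<nu> \<in> exponents_below s"
    and eq: "var_exponents e s \<mu> = var_exponents e s \<nu>"
  show "\<mu> i = \<nu> i"
  proof (cases "i < s")
    case True
    then show ?thesis
      using lookup_var_exponents[OF e True, of \<mu>] lookup_var_exponents[OF e True, of \<nu>] eq by simp
  next
    case False
    then show ?thesis
      using \<mu> \<nu> by (simp add: exponents_below_def)
  qed
qed

lemma monomial_characters_distinct:
  assumes x: "\<forall>i j. x i j \<noteq> 0"
    and trivial: "meets_coordinate_subspace_trivially (annihilator x A) J"
    and \<beta>: "\<And>j. j \<notin> J \<Longrightarrow> Poly_Mapping.lookup \<beta> j = 0"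
    and \<beta>': "\<And>j. j \<notin> J \<Longrightarrow> Poly_Mapping.lookup \<beta>' j = 0"
    and ne: "\<beta> \<noteq> \<beta>'"
  shows "\<exists>a\<in>A. monomial_value (tpow x a) \<beta> \<noteq> monomial_value (tpow x a) \<beta>'"
proof (rule ccontr)
  assume "\<not> ?thesis"
  then have "(\<lambda>j. int (Poly_Mapping.lookup \<beta> j) - int (Poly_Mapping.lookup \<beta>' j)) \<in> annihilator x A"
    by (intro diff_in_annihilator[OF x]) auto
  moreover have "\<forall>j. j \<notin> J \<longrightarrow> int (Poly_Mapping.lookup \<beta> j) - int (Poly_Mapping.lookup \<beta>' j) = 0"
    using \<beta> \<beta>' by simp
  ultimately have "Poly_Mapping.lookup \<beta> j = Poly_Mapping.lookup \<beta>' j" for j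
    using trivial unfolding meets_coordinate_subspace_trivially_def by fastforce
  then show False
    using ne by (meson poly_mapping_eqI)
qed

text \<open>Every element of \<open>P\<close> vanishes at all \<open>x\<^sup>a\<close>, \<open>a \<in> Stab\<^sub>X(P)\<close>, so a relation modulo \<open>P\<close> is a
  linear relation between characters of \<open>Stab\<^sub>X(P)\<close>.\<close>

lemma alg_indep_mod_vars:
  fixes x :: "'m::finite \<Rightarrow> 'n::finite \<Rightarrow> 'k::field"
  assumes x: "\<forall>i j. x i j \<noteq> 0" and P: "P \<subseteq> max_ideal_one"
    and trivial: "meets_coordinate_subspace_trivially (annihilator x (Stab x P)) J"
    and e: "bij_betw e {0..<card J} J"
  shows "alg_indep_mod P (\<lambda>i. var (e i)) (card J)"
  unfolding alg_indep_mod_def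
proof (intro allI impI)
  fix M c
  define s where "s = card J"
  define \<chi> where "\<chi> \<mu> a = monomial_value (tpow x a) (var_exponents e s \<mu>)" for \<mu> a
  assume fin: "finite M" and M: "M \<subseteq> exponents_below (card J)"
    and rel: "(\<Sum>\<mu>\<in>M. mpoly_const (c \<mu>) * power_product (\<lambda>i. var (e i)) (card J) \<mu>) \<in> P"
  have e_inj: "inj_on e {..<s}" and e_range: "e ` {..<s} = J"
    using e by (auto simp: bij_betw_def s_def atLeast0LessThan)
  have relation: "\<forall>a\<in>Stab x P. (\<Sum>\<mu>\<in>M. c \<mu> * \<chi> \<mu> a) = 0"
  proof
    fix a assume "a \<in> Stab x P"
    then have "mpoly_eval (\<Sum>\<mu>\<in>M. mpoly_const (c \<mu>) * power_product (\<lambda>i. var (e i)) s \<mu>) (tpow x a) = 0"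
      using mpoly_eval_tpow_Stab rel P by (simp add: s_def)
    then show "(\<Sum>\<mu>\<in>M. c \<mu> * \<chi> \<mu> a) = 0"
      by (simp add: mpoly_eval_sum power_product_var \<chi>_def mpoly_const_def mult_single)
  qed
  have distinct: "\<forall>\<mu>\<in>M. \<forall>\<nu>\<in>M. \<mu> \<noteq> \<nu> \<longrightarrow> (\<exists>a\<in>Stab x P. \<chi> \<mu> a \<noteq> \<chi> \<nu> a)"
  proof (intro ballI impI)
    fix \<mu> \<nu> assume "\<mu> \<in> M" "\<nu> \<in> M" "\<mu> \<noteq> \<nu>"
    then have "var_exponents e s \<mu> \<noteq> var_exponents e s \<nu>"
      using inj_on_var_exponents[OF e_inj] M by (auto simp: s_def inj_on_def)
    then show "\<exists>a\<in>Stab x P. \<chi> \<mu> a \<noteq> \<chi> \<nu> a"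
      unfolding \<chi>_def using e_range
      by (intro monomial_characters_distinct[OF x trivial]) (auto intro: lookup_var_exponents_notin)
  qed
  show "\<forall>\<mu>\<in>M. c \<mu> = 0"
  proof (rule linear_independence_of_characters[where op = "\<lambda>a b i. a i + b i",
        OF Stab_zero _ _ _ fin distinct relation])
    show "(\<lambda>i. a i + b i) \<in> Stab x P" if "a \<in> Stab x P" "b \<in> Stab x P" for a b
      using Stab_add[OF x that] .
    show "\<chi> \<mu> (\<lambda>i. a i + b i) = \<chi> \<mu> a * \<chi> \<mu> b" for \<mu> a b
      by (simp add: \<chi>_def monomial_value_tpow_add[OF x])
    show "\<chi> \<mu> (\<lambda>_. 0) = 1" for \<mu>
      by (simp add: \<chi>_def tpow_zero)
  qed
qed

lemma prime_chain_ending_height: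
  assumes height: "ideal_height P = enat n'" and P: "is_prime_ideal P"
  shows "prime_chain_ending P n'"
proof -
  define S where "S = {enat k | k. prime_chain_ending P k}"
  have Sup: "Sup S = enat n'"
    using height by (simp add: ideal_height_def S_def)
  have "S \<subseteq> enat ` {..n'}"
  proof
    fix y assume "y \<in> S"
    then obtain k where "y = enat k"
      by (auto simp: S_def)
    moreover have "y \<le> enat n'"
      using Sup_upper[OF \<open>y \<in> S\<close>] Sup by simp
    ultimately show "y \<in> enat ` {..n'}"
      by auto
  qed
  then have fin: "finite S"
    using finite_subset by blast
  have "prime_chain_ending P 0"
    unfolding prime_chain_ending_def by (rule exI[of _ "\<lambda>_. P"]) (simp add: P)
  then have nonempty: "S \<noteq> {}"
    by (auto simp: S_def)
  have "Sup S \<in> S"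
    using cSup_eq_Max[OF fin nonempty] Max_in[OF fin nonempty] by simp
  then show ?thesis
    using Sup by (auto simp: S_def)
qed

lemma Z_indep_family_annihilator_Stab:
  fixes x :: "'m::finite \<Rightarrow> 'n::finite \<Rightarrow> 'k::field"
  assumes x: "\<forall>i j. x i j \<noteq> 0" and P: "is_prime_ideal P" "P \<subseteq> max_ideal_one"
    and height: "ideal_height P = enat n'"
  shows "Z_indep_family (annihilator x (Stab x P)) n'"
proof (rule ccontr)
  assume "\<not> ?thesis"
  then obtain J where J: "card (UNIV :: 'n set) < card J + n'"
    and trivial: "meets_coordinate_subspace_trivially (annihilator x (Stab x P)) J"
    using exists_coordinate_set_meeting_trivially by blast
  obtain e where "bij_betw e {0..<card J} J"
    using ex_bij_betw_nat_finite[of J] by auto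
  then have vars: "alg_indep_mod P (\<lambda>i. var (e i)) (card J)"
    by (rule alg_indep_mod_vars[OF x P(2) trivial])
  obtain C where C: "\<forall>i\<le>n'. is_prime_ideal (C i)" "\<forall>i<n'. C i \<subset> C (Suc i)" "C n' = P"
    using prime_chain_ending_height[OF height P(1)] unfolding prime_chain_ending_def by blast
  obtain w where "alg_indep_mod (C 0) w (card J + n')"
    using alg_indep_mod_chain[OF C(1,2)] vars C(3) by blast
  then have "alg_indep_mod (C 0) w (Suc (card (UNIV :: 'n set)))"
    by (rule alg_indep_mod_le) (use J in simp)
  moreover have "0 \<in> C 0"
    using C(1) by (simp add: is_prime_ideal_def is_ideal_def)
  ultimately show False
    using not_alg_indep_mod_Suc_card[of "C 0" w] by blast
qed

theorem lemma5p9: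
  fixes x :: "'m::finite \<Rightarrow> 'n::finite \<Rightarrow> 'k::field_char_0"
    and P :: "('n, 'k) mpoly set"
    and n' :: nat
  assumes "\<forall>i j. x i j \<noteq> 0"
    and "is_prime_ideal P"
    and "P \<subseteq> max_ideal_one"
    and "ideal_height P = enat n'"
  shows "\<exists>B :: ('n \<Rightarrow> int) set. is_subgroup B \<and> Z_rank B \<ge> enat n' \<and>
           (\<forall>a\<in>Stab x P. \<forall>b\<in>B. pairing x a b = 1)"
proof (intro exI conjI)
  let ?B = "annihilator x (Stab x P)"
  show "is_subgroup ?B"
    using assms(1) by (rule is_subgroup_annihilator)
  show "Z_rank ?B \<ge> enat n'"
    unfolding Z_rank_def using Z_indep_family_annihilator_Stab[OF assms] by (blast intro: Sup_upper)
  show "\<forall>a\<in>Stab x P. \<forall>b\<in>?B. pairing x a b = 1"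
    by (simp add: annihilator_def)
qed

end
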